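(* Let $(M,g)$ be a $d$-dimensional Lorentzian manifold with $d>4$, let $p\in M$, and let $\{\ell,n,m^3,\dots,m^d\}$ be a null frame at $p$. Suppose the Weyl tensor $C$ at $p$ is invariant under the subgroup of the Lorentz group at $p$ that fixes $\ell$ and $n$ and acts as $SO(d-2)$, in its standard representation, on $\mathrm{span}\{m^3,\dots,m^d\}$. Then, in this null frame, the Weyl tensor is of type D(bcd): all components of nonzero boost weight vanish, and $\bar S_{ij}=0$, $\bar C_{ijkl}=0$ and $A_{ij}=0$. Consequently the Weyl tensor at $p$ has only one independent component, namely $\bar R$.
   Context: Null frame convention: the metric is $g=2\,\ell\, n+\delta_{ij}m^im^j$, i.e. $g(\ell,n)=1$, $g(m^i,m^j)=\delta_{ij}$, all other products zero. Frame indices: $0$ refers to $\ell$, $1$ to $n$, and $i,j,k,l\in\{3,\dots,d\}$ to the $m^i$; set $n=d-2$ (number of spatial directions). $C_{abcd}$ are the frame components of the Weyl tensor. The boost weight of a component $C_{abcd}$ is (number of indices equal to $0$) minus (number of indices equal to $1$). Define $\bar R_{ij}=\sum_k C_{kikj}$, $\bar R=\sum_i \bar R_{ii}$, $\bar S_{ij}=\bar R_{ij}-\frac1{n}\bar R\,\delta_{ij}$ (trace-free part), $\bar C_{ijkl}$ = the Weyl (totally trace-free) part of the algebraic curvature tensor $C_{ijkl}$ on $\mathbb R^{n}$ with Euclidean metric $\delta_{ij}$, and $A_{ij}=C_{01ij}$. *)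

theory Defs
  imports "HOL-Analysis.Analysis"
begin

text \<open>Frame indices: 0 = l, 1 = n, 3..d = the spacelike m^i (index 2 is not used).
  A tensor at p is represented by its frame components, a function
  nat => nat => nat => nat => real, only meaningful on frame indices.\<close>

definition sp :: "nat \<Rightarrow> nat set" where
  "sp d = {3..d}"

definition idx :: "nat \<Rightarrow> nat set" where
  "idx d = {0, 1} \<union> sp d"

definition kdelta :: "nat \<Rightarrow> nat \<Rightarrow> real" where
  "kdelta i j = (if i = j then 1 else 0)"

text \<open>Frame components of the metric g = 2 l n + delta_ij m^i m^j (its inverse has the
  same components).\<close>
definition eta :: "nat \<Rightarrow> nat \<Rightarrow> real" where
  "eta a b = (if (a = 0 \<and> b = 1) \<or> (a = 1 \<and> b = 0) then 1
              else if a \<ge> 3 \<and> b \<ge> 3 \<and> a = b then 1 else 0)"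

definition is_weyl :: "nat \<Rightarrow> (nat \<Rightarrow> nat \<Rightarrow> nat \<Rightarrow> nat \<Rightarrow> real) \<Rightarrow> bool" where
  "is_weyl d C \<longleftrightarrow>
     (\<forall>a\<in>idx d. \<forall>b\<in>idx d. \<forall>c\<in>idx d. \<forall>e\<in>idx d.
        C a b c e = - C b a c e \<and> C a b c e = - C a b e c \<and> C a b c e = C c e a b \<and>
        C a b c e + C a c e b + C a e b c = 0) \<and>
     (\<forall>b\<in>idx d. \<forall>e\<in>idx d. (\<Sum>a\<in>idx d. \<Sum>c\<in>idx d. eta a c * C a b c e) = 0)"

definition det_on :: "nat set \<Rightarrow> (nat \<Rightarrow> nat \<Rightarrow> real) \<Rightarrow> real" where
  "det_on S R = (\<Sum>p\<in>{p. p permutes S}. of_int (sign p) * (\<Prod>i\<in>S. R i (p i)))"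

definition in_SO :: "nat \<Rightarrow> (nat \<Rightarrow> nat \<Rightarrow> real) \<Rightarrow> bool" where
  "in_SO d R \<longleftrightarrow>
     (\<forall>i\<in>sp d. \<forall>j\<in>sp d. (\<Sum>k\<in>sp d. R i k * R j k) = kdelta i j) \<and> det_on (sp d) R = 1"

text \<open>The Lorentz transformation fixing l and n and acting as R on the m^i:
  new frame vector e'_a = sum_b lor d R a b e_b.\<close>
definition lor :: "nat \<Rightarrow> (nat \<Rightarrow> nat \<Rightarrow> real) \<Rightarrow> nat \<Rightarrow> nat \<Rightarrow> real" where
  "lor d R a b = (if a = 0 \<and> b = 0 then 1 else if a = 1 \<and> b = 1 then 1
                  else if a \<in> sp d \<and> b \<in> sp d then R a b else 0)"

definition transform ::
  "nat \<Rightarrow> (nat \<Rightarrow> nat \<Rightarrow> real) \<Rightarrow> (nat \<Rightarrow> nat \<Rightarrow> nat \<Rightarrow> nat \<Rightarrow> real) \<Rightarrow> nat \<Rightarrow> nat \<Rightarrow> nat \<Rightarrow> nat \<Rightarrow> real" where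
  "transform d R C a b c e =
     (\<Sum>p\<in>idx d. \<Sum>q\<in>idx d. \<Sum>r\<in>idx d. \<Sum>s\<in>idx d.
        lor d R a p * lor d R b q * lor d R c r * lor d R e s * C p q r s)"

definition SO_invariant :: "nat \<Rightarrow> (nat \<Rightarrow> nat \<Rightarrow> nat \<Rightarrow> nat \<Rightarrow> real) \<Rightarrow> bool" where
  "SO_invariant d C \<longleftrightarrow>
     (\<forall>R. in_SO d R \<longrightarrow> (\<forall>a\<in>idx d. \<forall>b\<in>idx d. \<forall>c\<in>idx d. \<forall>e\<in>idx d.
         transform d R C a b c e = C a b c e))"

definition cnt :: "nat \<Rightarrow> nat \<Rightarrow> nat \<Rightarrow> nat \<Rightarrow> nat \<Rightarrow> int" where
  "cnt x a b c e = (if a = x then 1 else 0) + (if b = x then 1 else 0)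
                 + (if c = x then 1 else 0) + (if e = x then 1 else 0)"

definition boost_weight :: "nat \<Rightarrow> nat \<Rightarrow> nat \<Rightarrow> nat \<Rightarrow> int" where
  "boost_weight a b c e = cnt 0 a b c e - cnt 1 a b c e"

definition Rbar_ij :: "nat \<Rightarrow> (nat \<Rightarrow> nat \<Rightarrow> nat \<Rightarrow> nat \<Rightarrow> real) \<Rightarrow> nat \<Rightarrow> nat \<Rightarrow> real" where
  "Rbar_ij d C i j = (\<Sum>k\<in>sp d. C k i k j)"

definition Rbar :: "nat \<Rightarrow> (nat \<Rightarrow> nat \<Rightarrow> nat \<Rightarrow> nat \<Rightarrow> real) \<Rightarrow> real" where
  "Rbar d C = (\<Sum>i\<in>sp d. Rbar_ij d C i i)"

definition Sbar :: "nat \<Rightarrow> (nat \<Rightarrow> nat \<Rightarrow> nat \<Rightarrow> nat \<Rightarrow> real) \<Rightarrow> nat \<Rightarrow> nat \<Rightarrow> real" where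
  "Sbar d C i j = Rbar_ij d C i j - Rbar d C / (real d - 2) * kdelta i j"

text \<open>Weyl part of the algebraic curvature tensor C_ijkl on R^n, n = d - 2 (standard
  Ricci decomposition, Ricci tensor Rbar_ij obtained by contracting 1st and 3rd index).\<close>
definition Cbar :: "nat \<Rightarrow> (nat \<Rightarrow> nat \<Rightarrow> nat \<Rightarrow> nat \<Rightarrow> real) \<Rightarrow> nat \<Rightarrow> nat \<Rightarrow> nat \<Rightarrow> nat \<Rightarrow> real" where
  "Cbar d C i j k l =
     (let n = real d - 2 in
      C i j k l
      - (kdelta i k * Rbar_ij d C j l - kdelta i l * Rbar_ij d C j k
         + kdelta j l * Rbar_ij d C i k - kdelta j k * Rbar_ij d C i l) / (n - 2)
      + Rbar d C * (kdelta i k * kdelta j l - kdelta i l * kdelta j k) / ((n - 1) * (n - 2)))"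

definition Acomp :: "(nat \<Rightarrow> nat \<Rightarrow> nat \<Rightarrow> nat \<Rightarrow> real) \<Rightarrow> nat \<Rightarrow> nat \<Rightarrow> real" where
  "Acomp C i j = C 0 1 i j"

definition type_Dbcd :: "nat \<Rightarrow> (nat \<Rightarrow> nat \<Rightarrow> nat \<Rightarrow> nat \<Rightarrow> real) \<Rightarrow> bool" where
  "type_Dbcd d C \<longleftrightarrow>
     (\<forall>a\<in>idx d. \<forall>b\<in>idx d. \<forall>c\<in>idx d. \<forall>e\<in>idx d. boost_weight a b c e \<noteq> 0 \<longrightarrow> C a b c e = 0) \<and>
     (\<forall>i\<in>sp d. \<forall>j\<in>sp d. Sbar d C i j = 0) \<and>
     (\<forall>i\<in>sp d. \<forall>j\<in>sp d. \<forall>k\<in>sp d. \<forall>l\<in>sp d. Cbar d C i j k l = 0) \<and>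
     (\<forall>i\<in>sp d. \<forall>j\<in>sp d. Acomp C i j = 0)"

end

theory Submission
  imports Defs
begin

text \<open>The group SO(n), n = d - 2, contains the signed permutation matrices of determinant one,
  and invariance under these alone forces the result. Reflecting two spatial axes kills every
  component in which they occur an odd number of times in total; since n \<ge> 3 a second axis is
  always available. Transpositions and 3-cycles of spatial axes together with the Bianchi
  identity leave only C_{ijij} = \<kappa>, C_{0i0i}, C_{1i1i}, C_{0i1i} = \<beta> and C_{0101} = \<alpha>
  (up to the index symmetries), and the trace conditions give C_{0i0i} = C_{1i1i} = 0,
  \<beta> = -(n - 1) \<kappa> / 2 and \<alpha> = n \<beta>. Hence C = \<kappa> G for a single tensor G of boost weight zero
  built from Kulkarni-Nomizu products, and Rbar = n (n - 1) \<kappa>.\<close>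

lemma null_notin_sp [simp]: "0 \<notin> sp d" "1 \<notin> sp d" "Suc 0 \<notin> sp d"
  and sp_neq_null: "x \<in> sp d \<Longrightarrow> x \<noteq> 0" "x \<in> sp d \<Longrightarrow> x \<noteq> 1" "x \<in> sp d \<Longrightarrow> x \<noteq> Suc 0"
  by (auto simp: sp_def)

lemma null_in_idx [simp]: "0 \<in> idx d" "1 \<in> idx d" "Suc 0 \<in> idx d"
  by (auto simp: idx_def)

lemma finite_sp [simp]: "finite (sp d)"
  and finite_idx [simp]: "finite (idx d)"
  and card_sp: "card (sp d) = d - 2"
  by (simp_all add: sp_def idx_def)

lemma sp_in_idx: "a \<in> sp d \<Longrightarrow> a \<in> idx d"
  by (simp add: idx_def)

lemma idx_cases: "a \<in> idx d \<Longrightarrow> a = 0 \<or> a = 1 \<or> a \<in> sp d"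
  by (auto simp: idx_def)

lemma permutes_sp_idx: "\<pi> permutes sp d \<Longrightarrow> a \<in> idx d \<Longrightarrow> \<pi> a \<in> idx d"
  by (metis idx_cases null_in_idx(1,2) permutes_in_image permutes_not_in null_notin_sp(1,2) sp_in_idx)

section \<open>Signed permutation matrices in SO(n)\<close>

definition monomial_matrix :: "(nat \<Rightarrow> nat) \<Rightarrow> (nat \<Rightarrow> real) \<Rightarrow> nat \<Rightarrow> nat \<Rightarrow> real" where
  "monomial_matrix \<pi> s i k = (if k = \<pi> i then s i else 0)"

definition frame_sign :: "nat \<Rightarrow> (nat \<Rightarrow> real) \<Rightarrow> nat \<Rightarrow> real" where
  "frame_sign d s a = (if a \<in> sp d then s a else 1)"

lemma lor_monomial_matrix:
  assumes "\<pi> permutes sp d" "a \<in> idx d" "p \<in> idx d"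
  shows "lor d (monomial_matrix \<pi> s) a p = (if p = \<pi> a then frame_sign d s a else 0)"
proof -
  have fix_null: "x \<notin> sp d \<Longrightarrow> \<pi> x = x" for x
    using assms(1) permutes_not_in by metis
  have maps_sp: "x \<in> sp d \<Longrightarrow> \<pi> x \<in> sp d" for x
    using assms(1) permutes_in_image by metis
  show ?thesis
    using idx_cases[OF assms(2)] idx_cases[OF assms(3)]
    by (auto simp: lor_def monomial_matrix_def frame_sign_def fix_null dest: maps_sp)
qed

lemma sum_delta_mult:
  "finite I \<Longrightarrow> x \<in> I \<Longrightarrow> (\<Sum>t\<in>I. (if t = x then c else 0) * f t) = c * (f x :: real)"
  by (simp add: if_distrib[of "\<lambda>u. u * _"] cong: if_cong)

lemma transform_monomial_matrix:
  assumes "\<pi> permutes sp d" "a \<in> idx d" "b \<in> idx d" "c \<in> idx d" "e \<in> idx d"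
  shows "transform d (monomial_matrix \<pi> s) C a b c e =
    frame_sign d s a * frame_sign d s b * frame_sign d s c * frame_sign d s e
      * C (\<pi> a) (\<pi> b) (\<pi> c) (\<pi> e)"
proof -
  let ?L = "\<lambda>a p. if p = \<pi> a then frame_sign d s a else 0"
  have "transform d (monomial_matrix \<pi> s) C a b c e =
    (\<Sum>p\<in>idx d. ?L a p * (\<Sum>q\<in>idx d. ?L b q * (\<Sum>r\<in>idx d. ?L c r
       * (\<Sum>t\<in>idx d. ?L e t * C p q r t))))"
    unfolding transform_def
    by (simp add: lor_monomial_matrix assms sum_distrib_left mult.assoc cong: sum.cong)
  then show ?thesis
    by (simp add: sum_delta_mult permutes_sp_idx assms mult.assoc)
qed

lemma monomial_matrix_orthogonal:
  assumes "\<pi> permutes S" "finite S" "\<And>i. i \<in> S \<Longrightarrow> s i * s i = 1" "i \<in> S"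
  shows "(\<Sum>k\<in>S. monomial_matrix \<pi> s i k * monomial_matrix \<pi> s j k) = kdelta i j"
proof (cases "i = j")
  case True
  then show ?thesis
    using assms permutes_in_image[OF assms(1)]
    by (simp add: monomial_matrix_def kdelta_def if_distrib sum.delta' cong: if_cong)
next
  case False
  then have "\<pi> i \<noteq> \<pi> j"
    using assms(1) permutes_inj injD by metis
  then have "\<forall>k\<in>S. monomial_matrix \<pi> s i k * monomial_matrix \<pi> s j k = 0"
    by (auto simp: monomial_matrix_def)
  then have "(\<Sum>k\<in>S. monomial_matrix \<pi> s i k * monomial_matrix \<pi> s j k) = 0"
    by (rule sum.neutral)
  then show ?thesis
    using False by (simp add: kdelta_def)
qed

text \<open>In the Leibniz expansion only the term of the permutation \<pi> itself survives.\<close>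

lemma det_on_monomial_matrix:
  assumes "\<pi> permutes S" "finite S"
  shows "det_on S (monomial_matrix \<pi> s) = of_int (sign \<pi>) * prod s S"
proof -
  let ?P = "{p. p permutes S}"
  let ?term = "\<lambda>p. of_int (sign p) * (\<Prod>i\<in>S. monomial_matrix \<pi> s i (p i))"
  have other_terms: "?term p = 0" if "p \<in> ?P - {\<pi>}" for p
  proof -
    from that have "p \<noteq> \<pi>"
      by blast
    then obtain i where i: "p i \<noteq> \<pi> i"
      by (meson ext)
    then have "i \<in> S"
      using that assms(1) permutes_not_in by (metis mem_Collect_eq Diff_iff)
    moreover have "monomial_matrix \<pi> s i (p i) = 0"
      using i by (simp add: monomial_matrix_def)
    ultimately show ?thesis
      using prod_zero[OF assms(2)] by (metis mult_zero_right)
  qed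
  have "det_on S (monomial_matrix \<pi> s) = ?term \<pi> + (\<Sum>p\<in>?P - {\<pi>}. ?term p)"
    unfolding det_on_def using assms by (simp add: sum.remove finite_permutations)
  moreover have "(\<Sum>p\<in>?P - {\<pi>}. ?term p) = 0"
    by (intro sum.neutral ballI other_terms)
  ultimately show ?thesis
    by (simp add: monomial_matrix_def)
qed

lemma in_SO_monomial_matrix:
  assumes "\<pi> permutes sp d" "\<And>i. i \<in> sp d \<Longrightarrow> s i * s i = 1"
    and "of_int (sign \<pi>) * prod s (sp d) = 1"
  shows "in_SO d (monomial_matrix \<pi> s)"
  unfolding in_SO_def
  using monomial_matrix_orthogonal[OF assms(1) finite_sp assms(2)] det_on_monomial_matrix[OF assms(1)]
    assms(3)
  by simp

definition flip_sign :: "nat set \<Rightarrow> nat \<Rightarrow> real" where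
  "flip_sign A x = (if x \<in> A then -1 else 1)"

lemma prod_flip_sign: "A \<subseteq> sp d \<Longrightarrow> prod (flip_sign A) (sp d) = (-1) ^ card A"
  by (simp add: flip_sign_def prod.If_cases Int_absorb1 Int_absorb2)

lemma frame_sign_flip_sign: "A \<subseteq> sp d \<Longrightarrow> frame_sign d (flip_sign A) = flip_sign A"
  unfolding frame_sign_def flip_sign_def by (rule ext) auto

section \<open>The model tensor\<close>

definition spatial_metric :: "nat \<Rightarrow> nat \<Rightarrow> nat \<Rightarrow> real" where
  "spatial_metric d a b = (if a \<in> sp d \<and> a = b then 1 else 0)"

definition null_metric :: "nat \<Rightarrow> nat \<Rightarrow> real" where
  "null_metric a b = (if (a = 0 \<and> b = 1) \<or> (a = 1 \<and> b = 0) then 1 else 0)"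

definition kulkarni_nomizu ::
  "(nat \<Rightarrow> nat \<Rightarrow> real) \<Rightarrow> (nat \<Rightarrow> nat \<Rightarrow> real) \<Rightarrow> nat \<Rightarrow> nat \<Rightarrow> nat \<Rightarrow> nat \<Rightarrow> real" where
  "kulkarni_nomizu P Q a b c e = P a c * Q b e - P a e * Q b c + Q a c * P b e - Q a e * P b c"

text \<open>On frame indices eta = spatial_metric + null_metric. The coefficients below make
  typeD_tensor trace-free, with typeD_tensor d 3 4 3 4 = 1.\<close>

definition typeD_tensor :: "nat \<Rightarrow> nat \<Rightarrow> nat \<Rightarrow> nat \<Rightarrow> nat \<Rightarrow> real" where
  "typeD_tensor d a b c e =
     kulkarni_nomizu (spatial_metric d) (spatial_metric d) a b c e / 2
     - (real d - 3) / 2 * kulkarni_nomizu (spatial_metric d) null_metric a b c e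
     + (real d - 2) * (real d - 3) / 4 * kulkarni_nomizu null_metric null_metric a b c e"

lemma typeD_tensor_boost_weight:
  assumes "a \<in> idx d" "b \<in> idx d" "c \<in> idx d" "e \<in> idx d" "boost_weight a b c e \<noteq> 0"
  shows "typeD_tensor d a b c e = 0"
  using idx_cases[OF assms(1)] idx_cases[OF assms(2)] idx_cases[OF assms(3)] idx_cases[OF assms(4)]
    assms(5)
  by (elim disjE) (simp_all add: boost_weight_def cnt_def typeD_tensor_def kulkarni_nomizu_def
      spatial_metric_def null_metric_def sp_neq_null)

lemma constant_curvature_Weyl_part:
  fixes n X :: real
  assumes "n \<noteq> 1" "n \<noteq> 2"
  shows "X - 2 * (n - 1) * X / (n - 2) + n * (n - 1) * X / ((n - 1) * (n - 2)) = 0"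
proof -
  have "n * (n - 1) * X / ((n - 1) * (n - 2)) = n * X / (n - 2)"
    using assms by simp
  moreover have "X - 2 * (n - 1) * X / (n - 2) + n * X / (n - 2) = X * ((n - 2) - 2 * (n - 1) + n) / (n - 2)"
    using assms by (simp add: field_simps)
  ultimately show ?thesis
    by simp
qed

section \<open>SO(n)-invariant Weyl tensors\<close>

locale SO_invariant_weyl =
  fixes d :: nat and C :: "nat \<Rightarrow> nat \<Rightarrow> nat \<Rightarrow> nat \<Rightarrow> real"
  assumes dim: "4 < d" and weyl: "is_weyl d C" and invariant: "SO_invariant d C"
begin

lemma three_four_in_sp [simp]: "3 \<in> sp d" "4 \<in> sp d"
  using dim by (auto simp: sp_def)

lemma real_card_sp: "real (card (sp d)) = real d - 2"
  using dim by (simp add: card_sp)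

lemma obtain_third_sp:
  assumes "i \<in> sp d" "j \<in> sp d"
  obtains k where "k \<in> sp d" "k \<noteq> i" "k \<noteq> j"
proof -
  have "\<not> sp d \<subseteq> {i, j}"
  proof
    assume "sp d \<subseteq> {i, j}"
    then have "card (sp d) \<le> card {i, j}"
      by (simp add: card_mono)
    also have "\<dots> \<le> 2"
      by (simp add: card_insert_le_m1)
    finally show False
      using dim by (simp add: card_sp)
  qed
  then show ?thesis
    using that by auto
qed

lemma invariant_monomial:
  assumes "\<pi> permutes sp d" "\<And>i. i \<in> sp d \<Longrightarrow> s i * s i = 1"
    and "of_int (sign \<pi>) * prod s (sp d) = 1"
    and "a \<in> idx d" "b \<in> idx d" "c \<in> idx d" "e \<in> idx d"
  shows "C a b c e =
    frame_sign d s a * frame_sign d s b * frame_sign d s c * frame_sign d s e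
      * C (\<pi> a) (\<pi> b) (\<pi> c) (\<pi> e)"
proof -
  have "transform d (monomial_matrix \<pi> s) C a b c e = C a b c e"
    using invariant in_SO_monomial_matrix[OF assms(1-3)] assms(4-7)
    unfolding SO_invariant_def by blast
  then show ?thesis
    using transform_monomial_matrix[OF assms(1,4-7)] by simp
qed

lemma flip_pair_vanishing:
  assumes "i \<in> sp d" "j \<in> sp d" "i \<noteq> j"
    and "a \<in> idx d" "b \<in> idx d" "c \<in> idx d" "e \<in> idx d"
    and "flip_sign {i, j} a * flip_sign {i, j} b * flip_sign {i, j} c * flip_sign {i, j} e = -1"
  shows "C a b c e = 0"
proof -
  let ?s = "flip_sign {i, j}"
  have A: "{i, j} \<subseteq> sp d"
    using assms by auto
  have "prod ?s (sp d) = 1"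
    using prod_flip_sign[OF A] assms(3) by simp
  then have "C a b c e =
    frame_sign d ?s a * frame_sign d ?s b * frame_sign d ?s c * frame_sign d ?s e
      * C (id a) (id b) (id c) (id e)"
    by (intro invariant_monomial permutes_id) (use assms in \<open>auto simp: flip_sign_def\<close>)
  then have "C a b c e = - C a b c e"
    using assms(8) by (simp only: frame_sign_flip_sign[OF A] id_apply)
  then show ?thesis
    by simp
qed

lemma transposition_invariance:
  assumes "p \<in> sp d" "q \<in> sp d" "p \<noteq> q"
    and "a \<in> idx d" "b \<in> idx d" "c \<in> idx d" "e \<in> idx d"
  shows "C a b c e = flip_sign {q} a * flip_sign {q} b * flip_sign {q} c * flip_sign {q} e *
    C (Transposition.transpose p q a) (Transposition.transpose p q b)
      (Transposition.transpose p q c) (Transposition.transpose p q e)"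
proof -
  let ?s = "flip_sign {q}"
  have A: "{q} \<subseteq> sp d"
    using assms by auto
  have "of_int (sign (Transposition.transpose p q)) * prod ?s (sp d) = 1"
    using prod_flip_sign[OF A] assms(3) by (simp add: sign_swap_id)
  then have "C a b c e =
    frame_sign d ?s a * frame_sign d ?s b * frame_sign d ?s c * frame_sign d ?s e
      * C (Transposition.transpose p q a) (Transposition.transpose p q b)
          (Transposition.transpose p q c) (Transposition.transpose p q e)"
    by (intro invariant_monomial permutes_swap_id) (use assms in \<open>auto simp: flip_sign_def\<close>)
  then show ?thesis
    by (simp only: frame_sign_flip_sign[OF A])
qed

lemma three_cycle_invariance:
  assumes "b \<in> sp d" "c \<in> sp d" "e \<in> sp d" "b \<noteq> c" "b \<noteq> e" "c \<noteq> e"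
    and "a \<in> idx d" "a \<noteq> b" "a \<noteq> c" "a \<noteq> e"
  shows "C a b c e = C a c e b"
proof -
  let ?\<pi> = "Transposition.transpose b c \<circ> Transposition.transpose c e"
  have "?\<pi> permutes sp d"
    using assms by (intro permutes_compose permutes_swap_id)
  moreover have "sign ?\<pi> = 1"
    using assms by (simp add: sign_compose permutation_swap_id sign_swap_id)
  moreover have "frame_sign d (\<lambda>_. 1) x = 1" for x
    by (simp add: frame_sign_def)
  ultimately have "C a b c e = C (?\<pi> a) (?\<pi> b) (?\<pi> c) (?\<pi> e)"
    using invariant_monomial[of ?\<pi> "\<lambda>_. 1" a b c e] assms sp_in_idx by (simp only: mult_1) simp
  moreover have "?\<pi> a = a" "?\<pi> b = c" "?\<pi> c = e" "?\<pi> e = b"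
    using assms by (auto simp: Transposition.transpose_def)
  ultimately show ?thesis
    by simp
qed

lemma antisym_left: "a \<in> idx d \<Longrightarrow> b \<in> idx d \<Longrightarrow> c \<in> idx d \<Longrightarrow> e \<in> idx d \<Longrightarrow> C a b c e = - C b a c e"
  and antisym_right: "a \<in> idx d \<Longrightarrow> b \<in> idx d \<Longrightarrow> c \<in> idx d \<Longrightarrow> e \<in> idx d \<Longrightarrow> C a b c e = - C a b e c"
  and pair_sym: "a \<in> idx d \<Longrightarrow> b \<in> idx d \<Longrightarrow> c \<in> idx d \<Longrightarrow> e \<in> idx d \<Longrightarrow> C a b c e = C c e a b"
  and bianchi: "a \<in> idx d \<Longrightarrow> b \<in> idx d \<Longrightarrow> c \<in> idx d \<Longrightarrow> e \<in> idx d \<Longrightarrow> C a b c e + C a c e b + C a e b c = 0"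
  using weyl unfolding is_weyl_def by blast+

lemma repeated_left [simp]: "a \<in> idx d \<Longrightarrow> c \<in> idx d \<Longrightarrow> e \<in> idx d \<Longrightarrow> C a a c e = 0"
  using antisym_left[of a a c e] by simp

lemma repeated_right [simp]: "a \<in> idx d \<Longrightarrow> b \<in> idx d \<Longrightarrow> c \<in> idx d \<Longrightarrow> C a b c c = 0"
  using antisym_right[of a b c c] by simp

text \<open>A 3-cycle of the last three indices preserves C, so all three Bianchi terms agree.\<close>

lemma distinct_spatial_triple_vanishing:
  assumes "b \<in> sp d" "c \<in> sp d" "e \<in> sp d" "b \<noteq> c" "b \<noteq> e" "c \<noteq> e"
    and "a \<in> idx d" "a \<noteq> b" "a \<noteq> c" "a \<noteq> e"
  shows "C a b c e = 0"
proof -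
  have "C a b c e = C a c e b" "C a c e b = C a e b c"
    using assms by (auto intro: three_cycle_invariance)
  moreover have "C a b c e + C a c e b + C a e b c = 0"
    using assms sp_in_idx by (intro bianchi) auto
  ultimately show ?thesis
    by simp
qed

definition null_dual :: "nat \<Rightarrow> nat" where
  "null_dual a = (if a = 0 then 1 else if a = 1 then 0 else a)"

lemma eta_null_dual: "a \<in> idx d \<Longrightarrow> c \<in> idx d \<Longrightarrow> eta a c = (if c = null_dual a then 1 else 0)"
  by (auto simp: eta_def null_dual_def idx_def sp_def)

lemma trace_free:
  assumes "b \<in> idx d" "e \<in> idx d"
  shows "C 0 b 1 e + C 1 b 0 e + (\<Sum>k\<in>sp d. C k b k e) = 0"
proof -
  have "(\<Sum>c\<in>idx d. eta a c * C a b c e) = C a b (null_dual a) e" if "a \<in> idx d" for a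
  proof -
    have "null_dual a \<in> idx d"
      using that by (auto simp: null_dual_def)
    then show ?thesis
      using sum_delta_mult[of "idx d" "null_dual a" 1 "\<lambda>c. C a b c e"] that
      by (simp add: eta_null_dual cong: sum.cong)
  qed
  moreover have "(\<Sum>a\<in>idx d. \<Sum>c\<in>idx d. eta a c * C a b c e) = 0"
    using weyl assms unfolding is_weyl_def by blast
  ultimately have "(\<Sum>a\<in>idx d. C a b (null_dual a) e) = 0"
    by simp
  moreover have "idx d = insert 0 (insert 1 (sp d))"
    by (auto simp: idx_def)
  moreover have "(\<Sum>a\<in>sp d. C a b (null_dual a) e) = (\<Sum>k\<in>sp d. C k b k e)"
    by (rule sum.cong) (auto simp: null_dual_def)
  ultimately show ?thesis
    by (simp add: null_dual_def)
qed

definition kappa :: real where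
  "kappa = C 3 4 3 4"

lemma sectional_transposition:
  assumes "i \<in> sp d" "j \<in> sp d" "l \<in> sp d" "i \<noteq> j" "i \<noteq> l"
  shows "C i j i j = C i l i l"
proof (cases "j = l")
  case False
  then have "C i j i j = flip_sign {l} i * flip_sign {l} j * flip_sign {l} i * flip_sign {l} j *
    C (Transposition.transpose j l i) (Transposition.transpose j l j)
      (Transposition.transpose j l i) (Transposition.transpose j l j)"
    using assms sp_in_idx by (intro transposition_invariance) auto
  then show ?thesis
    using assms False by (simp add: flip_sign_def Transposition.transpose_def)
qed simp

lemma sectional_const:
  assumes "i \<in> sp d" "j \<in> sp d" "i \<noteq> j"
  shows "C i j i j = kappa"
proof (cases "i = 3")
  case True
  then show ?thesis
    using sectional_transposition[of i j 4] assms by (simp add: kappa_def)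
next
  case False
  have "C i j i j = C i 3 i 3"
    using sectional_transposition[of i j 3] assms False by simp
  also have "\<dots> = C 3 i 3 i"
    using antisym_left[of i 3 i 3] antisym_right[of 3 i i 3] assms sp_in_idx by simp
  also have "\<dots> = kappa"
    using sectional_transposition[of 3 i 4] assms False by (simp add: kappa_def)
  finally show ?thesis .
qed

lemma spatial_components:
  assumes "i \<in> sp d" "j \<in> sp d" "k \<in> sp d" "l \<in> sp d"
  shows "C i j k l = kappa * (kdelta i k * kdelta j l - kdelta i l * kdelta j k)"
proof -
  have sec: "x \<in> sp d \<Longrightarrow> y \<in> sp d \<Longrightarrow> x \<noteq> y \<Longrightarrow> C x y y x = - kappa" for x y
    using sectional_const[of x y] antisym_right[of x y y x] sp_in_idx by force
  have flip: "C x y x z = 0" "C x y z x = 0" "C y x x z = 0" "C y x z x = 0"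
    if "x \<in> sp d" "y \<in> sp d" "z \<in> sp d" "x \<noteq> y" "x \<noteq> z" "y \<noteq> z" for x y z
    by (rule flip_pair_vanishing[of x y]; use that sp_in_idx in \<open>auto simp: flip_sign_def\<close>)+
  have distinct: "C x y z w = 0"
    if "x \<in> sp d" "y \<in> sp d" "z \<in> sp d" "w \<in> sp d" "distinct [x, y, z, w]" for x y z w
    using that sp_in_idx by (intro distinct_spatial_triple_vanishing) auto
  show ?thesis
  proof (cases "i = j \<or> k = l")
    case True
    then show ?thesis
      using assms sp_in_idx by (auto simp: kdelta_def)
  next
    case False
    then show ?thesis
      using assms
      by (cases "i = k"; cases "i = l"; cases "j = k"; cases "j = l")
        (simp_all add: kdelta_def sectional_const sec flip distinct)
  qed
qed

lemma null_index: "x \<in> {0, 1} \<Longrightarrow> x \<in> idx d" "x \<in> {0, 1} \<Longrightarrow> x \<notin> sp d"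
  by auto

lemma one_null_component:
  assumes "x \<in> {0, 1}" "i \<in> sp d" "j \<in> sp d" "k \<in> sp d"
  shows "C x i j k = 0"
proof -
  have I: "i \<in> idx d" "j \<in> idx d" "k \<in> idx d" "x \<in> idx d" "x \<notin> {i, j, k}"
    using assms sp_in_idx null_index by auto
  consider "j = k" | "i = j" "j \<noteq> k" | "i = k" "j \<noteq> k" | "distinct [i, j, k]"
    by fastforce
  then show ?thesis
  proof cases
    case 1
    then show ?thesis
      using I by simp
  next
    case 2
    then show ?thesis
      using assms I by (intro flip_pair_vanishing[of i k]) (auto simp: flip_sign_def)
  next
    case 3
    then show ?thesis
      using assms I by (intro flip_pair_vanishing[of i j]) (auto simp: flip_sign_def)
  next
    case 4
    then show ?thesis
      using assms I by (intro distinct_spatial_triple_vanishing) auto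
  qed
qed

lemma one_null_components:
  assumes "x \<in> {0, 1}" "i \<in> sp d" "j \<in> sp d" "k \<in> sp d"
  shows "C x i j k = 0" "C i x j k = 0" "C i j x k = 0" "C i j k x = 0"
proof -
  have I: "i \<in> idx d" "j \<in> idx d" "k \<in> idx d" "x \<in> idx d"
    using assms sp_in_idx null_index by auto
  show "C x i j k = 0"
    using assms by (rule one_null_component)
  then show "C i x j k = 0"
    using antisym_left[of i x j k] I by simp
  have "C i j x k = 0"
    using pair_sym[of i j x k] one_null_component[of x k i j] assms I by simp
  then show "C i j x k = 0" "C i j k x = 0"
    using antisym_right[of i j k x] I by simp_all
qed

lemma three_null_components:
  assumes "x \<in> {0, 1}" "y \<in> {0, 1}" "z \<in> {0, 1}" "i \<in> sp d"
  shows "C i x y z = 0" "C x i y z = 0" "C x y i z = 0" "C x y z i = 0"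
proof -
  obtain w where w: "w \<in> sp d" "w \<noteq> i"
    using obtain_third_sp[of i i] assms by metis
  have "x \<notin> {i, w}" "y \<notin> {i, w}" "z \<notin> {i, w}"
    using assms w by auto
  then show "C i x y z = 0" "C x i y z = 0" "C x y i z = 0" "C x y z i = 0"
    using assms w sp_in_idx null_index
    by (auto intro!: flip_pair_vanishing[of i w] simp: flip_sign_def)
qed

lemma null_spatial_offdiag:
  assumes "x \<in> {0, 1}" "y \<in> {0, 1}" "i \<in> sp d" "j \<in> sp d" "i \<noteq> j"
  shows "C x i y j = 0"
proof -
  obtain z where "z \<in> sp d" "z \<noteq> i" "z \<noteq> j"
    using obtain_third_sp assms by metis
  then show ?thesis
    using assms sp_in_idx null_index by (intro flip_pair_vanishing[of i z]) (auto simp: flip_sign_def)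
qed

lemma null_pair_spatial_pair:
  assumes "x \<in> {0, 1}" "y \<in> {0, 1}" "i \<in> sp d" "j \<in> sp d"
  shows "C x y i j = 0" "C i j x y = 0"
proof -
  show "C x y i j = 0"
  proof (cases "i = j")
    case True
    then show ?thesis
      using assms sp_in_idx null_index by simp
  next
    case False
    obtain z where "z \<in> sp d" "z \<noteq> i" "z \<noteq> j"
      using obtain_third_sp assms by metis
    then show ?thesis
      using assms False sp_in_idx null_index
      by (intro flip_pair_vanishing[of i z]) (auto simp: flip_sign_def)
  qed
  then show "C i j x y = 0"
    using pair_sym[of i j x y] assms sp_in_idx null_index by simp
qed

lemma null_spatial_diag_const:
  assumes "x \<in> {0, 1}" "y \<in> {0, 1}" "i \<in> sp d" "j \<in> sp d"
  shows "C x i y i = C x j y j"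
proof (cases "i = j")
  case False
  have "C x i y i = flip_sign {j} x * flip_sign {j} i * flip_sign {j} y * flip_sign {j} i *
    C (Transposition.transpose i j x) (Transposition.transpose i j i)
      (Transposition.transpose i j y) (Transposition.transpose i j i)"
    using assms False sp_in_idx null_index by (intro transposition_invariance) auto
  moreover have "x \<noteq> i" "x \<noteq> j" "y \<noteq> i" "y \<noteq> j"
    using assms by auto
  ultimately show ?thesis
    using False by (simp add: flip_sign_def)
qed simp

lemma null_spatial_symmetric:
  assumes "x \<in> {0, 1}" "y \<in> {0, 1}" "i \<in> sp d"
  shows "C i x i y = C x i y i"
  using antisym_left[of i x i y] antisym_right[of x i i y] assms sp_in_idx null_index by simp

lemma null_spatial_diag_vanishing:
  assumes "x \<in> {0, 1}" "i \<in> sp d"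
  shows "C x i x i = 0"
proof -
  have "C x 3 x 3 = 0"
  proof -
    have "C 0 x 1 x + C 1 x 0 x + (\<Sum>k\<in>sp d. C k x k x) = 0"
      using assms by (intro trace_free) auto
    moreover have "C k x k x = C x 3 x 3" if "k \<in> sp d" for k
      using null_spatial_symmetric[of x x k] null_spatial_diag_const[of x x k 3] assms that by simp
    ultimately have "real (card (sp d)) * C x 3 x 3 = 0"
      using assms by auto
    then show ?thesis
      using real_card_sp dim by simp
  qed
  then show ?thesis
    using null_spatial_diag_const[of x x i 3] assms by simp
qed

definition beta :: real where
  "beta = C 0 3 1 3"

lemma beta_eq: "beta = - (real d - 3) / 2 * kappa"
proof -
  have "C 0 3 1 3 + C 1 3 0 3 + (\<Sum>k\<in>sp d. C k 3 k 3) = 0"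
    by (intro trace_free) (auto intro: sp_in_idx)
  moreover have "C 1 3 0 3 = C 0 3 1 3"
    using pair_sym[of 1 3 0 3] sp_in_idx by auto
  moreover have "(\<Sum>k\<in>sp d. C k 3 k 3) = (\<Sum>k\<in>sp d. kappa * (1 - kdelta k 3))"
    by (rule sum.cong) (auto simp: spatial_components kdelta_def)
  moreover have "(\<Sum>k\<in>sp d. kappa * (1 - kdelta k 3)) = kappa * (real d - 3)"
    by (simp add: sum_distrib_left[symmetric] sum_subtractf kdelta_def real_card_sp)
  ultimately show ?thesis
    by (simp add: beta_def field_simps)
qed

lemma two_null_components:
  assumes "x \<in> {0, 1}" "y \<in> {0, 1}" "i \<in> sp d" "j \<in> sp d"
  defines "v \<equiv> if i = j \<and> x \<noteq> y then beta else 0"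
  shows "C x i y j = v" "C x i j y = - v" "C i x y j = - v" "C i x j y = v"
    and "C x y i j = 0" "C i j x y = 0"
proof -
  have I: "x \<in> idx d" "y \<in> idx d" "i \<in> idx d" "j \<in> idx d"
    using assms sp_in_idx null_index by auto
  have xiyj: "C x i y j = v"
  proof (cases "i = j")
    case True
    have "C 0 i 1 i = beta" "C 1 i 0 i = beta"
      using null_spatial_diag_const[of 0 1 i 3] null_spatial_diag_const[of 1 0 i 3]
        pair_sym[of 1 3 0 3] assms sp_in_idx by (simp_all add: beta_def)
    then show ?thesis
      using True assms null_spatial_diag_vanishing[of x i] by (auto simp: v_def)
  qed (use assms null_spatial_offdiag in \<open>auto simp: v_def\<close>)
  then show "C x i y j = v" .
  show "C x i j y = - v"
    using antisym_right[of x i j y] xiyj I by simp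
  show "C i x y j = - v"
    using antisym_left[of i x y j] xiyj I by simp
  show "C i x j y = v"
    using antisym_left[of i x j y] antisym_right[of x i j y] xiyj I by simp
  show "C x y i j = 0" "C i j x y = 0"
    using null_pair_spatial_pair assms by simp_all
qed

definition alpha :: real where
  "alpha = C 0 1 0 1"

lemma alpha_eq: "alpha = (real d - 2) * beta"
proof -
  have "C 0 0 1 1 + C 1 0 0 1 + (\<Sum>k\<in>sp d. C k 0 k 1) = 0"
    by (intro trace_free) auto
  moreover have "C 1 0 0 1 = - C 0 1 0 1"
    using antisym_left[of 1 0 0 1] by auto
  moreover have "C k 0 k 1 = beta" if "k \<in> sp d" for k
    using two_null_components(4)[of 0 1 k k] that by simp
  ultimately show ?thesis
    by (simp add: alpha_def real_card_sp)
qed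

lemma four_null_components:
  "C 0 1 0 1 = alpha" "C 0 1 1 0 = - alpha" "C 1 0 0 1 = - alpha" "C 1 0 1 0 = alpha"
  using antisym_left[of 1 0 0 1] antisym_right[of 0 1 1 0] antisym_left[of 1 0 1 0]
  by (auto simp: alpha_def)

lemma components_eq_typeD_tensor:
  assumes "a \<in> idx d" "b \<in> idx d" "c \<in> idx d" "e \<in> idx d"
  shows "C a b c e = kappa * typeD_tensor d a b c e"
  using idx_cases[OF assms(1)] idx_cases[OF assms(2)] idx_cases[OF assms(3)] idx_cases[OF assms(4)]
  apply (elim disjE)
  apply (simp_all add: spatial_components one_null_components two_null_components
      three_null_components four_null_components[unfolded One_nat_def] beta_eq alpha_eq
      typeD_tensor_def kulkarni_nomizu_def spatial_metric_def null_metric_def kdelta_def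
      sp_neq_null sp_in_idx)
  apply (simp_all add: algebra_simps)
  done

lemma Rbar_ij_eq:
  assumes "i \<in> sp d" "j \<in> sp d"
  shows "Rbar_ij d C i j = (real d - 3) * kappa * kdelta i j"
proof -
  have "Rbar_ij d C i j = (\<Sum>k\<in>sp d. kappa * (kdelta i j - kdelta k j * kdelta i k))"
    unfolding Rbar_ij_def
    by (rule sum.cong) (use assms in \<open>auto simp: spatial_components kdelta_def\<close>)
  also have "\<dots> = kappa * ((real d - 2) * kdelta i j - kdelta i j)"
    using assms by (simp add: sum_distrib_left[symmetric] sum_subtractf real_card_sp kdelta_def
        if_distrib[of "\<lambda>u. u * _"] cong: if_cong)
  finally show ?thesis
    by (simp add: algebra_simps)
qed

lemma Rbar_eq: "Rbar d C = (real d - 2) * (real d - 3) * kappa"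
proof -
  have "Rbar d C = (\<Sum>i\<in>sp d. (real d - 3) * kappa)"
    unfolding Rbar_def by (rule sum.cong) (auto simp: Rbar_ij_eq kdelta_def)
  then show ?thesis
    by (simp add: real_card_sp)
qed

lemma Cbar_vanishing:
  assumes "i \<in> sp d" "j \<in> sp d" "k \<in> sp d" "l \<in> sp d"
  shows "Cbar d C i j k l = 0"
proof -
  let ?D = "kdelta i k * kdelta j l - kdelta i l * kdelta j k"
  let ?n = "real d - 2"
  have ricci: "kdelta i k * Rbar_ij d C j l - kdelta i l * Rbar_ij d C j k
      + kdelta j l * Rbar_ij d C i k - kdelta j k * Rbar_ij d C i l = 2 * (?n - 1) * (kappa * ?D)"
    using assms by (simp add: Rbar_ij_eq kdelta_def)
  have "Cbar d C i j k l = kappa * ?D - 2 * (?n - 1) * (kappa * ?D) / (?n - 2)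
      + ?n * (?n - 1) * (kappa * ?D) / ((?n - 1) * (?n - 2))"
    unfolding Cbar_def Let_def spatial_components[OF assms] ricci Rbar_eq
    by (simp add: mult.assoc)
  also have "\<dots> = 0"
    using dim by (intro constant_curvature_Weyl_part) auto
  finally show ?thesis .
qed

lemma type_Dbcd: "type_Dbcd d C"
proof -
  have "real d - 2 \<noteq> 0"
    using dim by auto
  then have "Sbar d C i j = 0" if "i \<in> sp d" "j \<in> sp d" for i j
    using that by (simp add: Sbar_def Rbar_ij_eq Rbar_eq)
  moreover have "C a b c e = 0"
    if "a \<in> idx d" "b \<in> idx d" "c \<in> idx d" "e \<in> idx d" "boost_weight a b c e \<noteq> 0" for a b c e
    using that by (simp add: components_eq_typeD_tensor typeD_tensor_boost_weight)
  ultimately show ?thesis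
    unfolding type_Dbcd_def Acomp_def
    using Cbar_vanishing two_null_components(5)[of 0 1] by simp
qed

end

theorem mainTheorem1:
  fixes d :: nat and C :: "nat \<Rightarrow> nat \<Rightarrow> nat \<Rightarrow> nat \<Rightarrow> real"
  assumes "d > 4"
    and "is_weyl d C"
    and "SO_invariant d C"
  shows "type_Dbcd d C \<and>
         (\<exists>K :: nat \<Rightarrow> nat \<Rightarrow> nat \<Rightarrow> nat \<Rightarrow> real. \<forall>C'. is_weyl d C' \<and> SO_invariant d C' \<longrightarrow>
            (\<forall>a\<in>idx d. \<forall>b\<in>idx d. \<forall>c\<in>idx d. \<forall>e\<in>idx d. C' a b c e = Rbar d C' * K a b c e))"
proof
  interpret SO_invariant_weyl d C
    using assms by unfold_locales
  show "type_Dbcd d C"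
    by (rule type_Dbcd)
  show "\<exists>K. \<forall>C'. is_weyl d C' \<and> SO_invariant d C' \<longrightarrow>
      (\<forall>a\<in>idx d. \<forall>b\<in>idx d. \<forall>c\<in>idx d. \<forall>e\<in>idx d. C' a b c e = Rbar d C' * K a b c e)"
  proof (intro exI allI impI ballI)
    fix C' a b c e
    assume "is_weyl d C' \<and> SO_invariant d C'" and abce: "a \<in> idx d" "b \<in> idx d" "c \<in> idx d" "e \<in> idx d"
    then interpret C': SO_invariant_weyl d C'
      using assms(1) by unfold_locales auto
    have "(real d - 2) * (real d - 3) \<noteq> 0"
      using assms(1) by simp
    then show "C' a b c e = Rbar d C' * (typeD_tensor d a b c e / ((real d - 2) * (real d - 3)))"
      using C'.components_eq_typeD_tensor[OF abce] unfolding C'.Rbar_eq by simp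
  qed
qed

end
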